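(* Let $I$ be an index set and $p_r,q_r\in\mathbb R\setminus\{0\}$ for $r\in I$. There exists a homeomorphism $f\colon\mathbb R\to\mathbb R$ with $f(p_rx)=q_rf(x)$ for all $x\in\mathbb R$, $r\in I$, if and only if there exists a real number $\alpha>-1$ such that $q_r=p_r|p_r|^{\alpha}$ for all $r\in I$. *)

theory Defs
  imports "HOL-Analysis.Analysis"
begin

end

theory Submission
  imports Defs
begin

(*
  A homeomorphism f of the real line is strictly monotone; replacing f by -f we may assume
  it is strictly increasing.  Call (a, b) a scaling pair of f when f (a * x) = b * f x for
  all x.  For an increasing f and a scaling pair with a > 0, a \<noteq> 1, the exponent
  ln b / ln a is positive and does not depend on the pair: comparing f (a ^ m) = b ^ m * f 1
  with f (a' ^ n) = b' ^ n * f 1 shows that m ln a \<le> n ln a' forces m ln b \<le> n ln b', and an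
  Archimedean argument turns this into an inequality of ratios.  Applying this to the pairs
  (p r ^ 2, q r ^ 2) yields one exponent \<beta> > 0 with |q r| = |p r| powr \<beta>, and scaling pairs
  preserve signs, so q r = p r * |p r| powr (\<beta> - 1).  Conversely, the signed power
  x \<mapsto> sgn x * |x| powr (\<alpha> + 1) is a homeomorphism with the required property.
*)

definition scales :: "(real \<Rightarrow> real) \<Rightarrow> real \<Rightarrow> real \<Rightarrow> bool" where
  "scales f a b \<longleftrightarrow> (\<forall>x. f (a * x) = b * f x)"

lemma scales_power:
  assumes "scales f a b"
  shows "scales f (a ^ n) (b ^ n)"
  unfolding scales_def
proof (induction n)
  case 0
  show ?case by simp
next
  case (Suc n)
  show ?case
  proof
    fix x
    have "f (a ^ Suc n * x) = f (a * (a ^ n * x))" by (simp add: mult.assoc)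
    also have "\<dots> = b * f (a ^ n * x)" using assms by (simp add: scales_def)
    finally show "f (a ^ Suc n * x) = b ^ Suc n * f x" using Suc by simp
  qed
qed

lemma scales_inverse:
  assumes "scales f a b" "a \<noteq> 0" "b \<noteq> 0"
  shows "scales f (1 / a) (1 / b)"
  unfolding scales_def
proof
  fix x
  have "f x = f (a * (1 / a * x))" using assms(2) by simp
  also have "\<dots> = b * f (1 / a * x)" using assms(1) unfolding scales_def by blast
  finally show "f (1 / a * x) = 1 / b * f x" using assms(3) by (simp add: field_simps)
qed

lemma scales_uminus: "scales f a b \<Longrightarrow> scales (\<lambda>x. - f x) a b"
  by (simp add: scales_def)

lemma scales_one:
  assumes "inj f" "scales f 1 b"
  shows "b = 1"
proof -
  have "f 0 \<noteq> f 1" using assms(1) by (metis injD zero_neq_one)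
  then obtain x where "f x \<noteq> 0" by metis
  moreover have "f x = b * f x" using assms(2) unfolding scales_def by (metis mult_1)
  ultimately show ?thesis by simp
qed

lemma scales_fixes_zero:
  assumes "inj f" "scales f a b" "a \<noteq> 1"
  shows "f 0 = 0"
proof -
  have "f a = b * f 1" using assms(2) by (metis scales_def mult.right_neutral)
  hence "b \<noteq> 1" using assms(1,3) by (metis injD mult_1)
  moreover have "f 0 = b * f 0" using assms(2) by (metis scales_def mult_zero_right)
  ultimately show ?thesis by (metis mult_cancel_right2)
qed

lemma scales_sign:
  assumes mono: "strict_mono f" and sc: "scales f a b" and "a \<noteq> 0"
  shows "sgn b = sgn a"
proof (cases "a = 1")
  case True
  thus ?thesis using scales_one[of f b] sc strict_mono_imp_inj_on[OF mono] by simp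
next
  case False
  have f0: "f 0 = 0" using scales_fixes_zero[OF strict_mono_imp_inj_on[OF mono] sc False] .
  have f1: "f 1 > 0" using strict_monoD[OF mono, of 0 1] f0 by simp
  have fa: "f a = b * f 1" using sc by (metis scales_def mult.right_neutral)
  show ?thesis
  proof (cases "a > 0")
    case True
    hence "b * f 1 > 0" using strict_monoD[OF mono True] f0 fa by simp
    thus ?thesis using f1 True by (simp add: zero_less_mult_iff)
  next
    case False
    hence "a < 0" using \<open>a \<noteq> 0\<close> by simp
    hence "b * f 1 < 0" using strict_monoD[OF mono \<open>a < 0\<close>] f0 fa by simp
    thus ?thesis using f1 \<open>a < 0\<close> by (simp add: mult_less_0_iff)
  qed
qed

lemma scales_expanding:
  assumes mono: "strict_mono f" and sc: "scales f a b" and "a > 1"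
  shows "b > 1"
proof -
  have f0: "f 0 = 0" using scales_fixes_zero[OF strict_mono_imp_inj_on[OF mono] sc] assms(3)
    by simp
  have f1: "f 1 > 0" using strict_monoD[OF mono, of 0 1] f0 by simp
  have "b * f 1 > f 1" using strict_monoD[OF mono \<open>a > 1\<close>] sc
    by (metis scales_def mult.right_neutral)
  thus ?thesis using f1 by simp
qed

lemma scales_unit:
  assumes "inj f" "scales f a b" "\<bar>a\<bar> = 1"
  shows "\<bar>b\<bar> = 1"
proof -
  have "a ^ 2 = 1" using assms(3) by (simp add: abs_square_eq_1)
  hence "scales f 1 (b ^ 2)" using scales_power[OF assms(2), of 2] by simp
  hence "b ^ 2 = 1" using scales_one[OF assms(1)] by blast
  thus ?thesis by (simp add: abs_square_eq_1)
qed

section \<open>The scaling exponent\<close>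

lemma ratio_le_of_multiples:
  fixes a a' b b' :: real
  assumes pos: "a > 0" "a' > 0" "b > 0" "b' > 0"
    and H: "\<And>m n. real m * a \<le> real n * a' \<Longrightarrow> real m * b \<le> real n * b'"
  shows "b / a \<le> b' / a'"
proof (rule ccontr)
  assume "\<not> ?thesis"
  hence gap: "a * b' < a' * b" using pos by (simp add: field_simps)
  obtain n :: nat where n: "a * b / (a' * b - a * b') < n"
    using reals_Archimedean2 by blast
  define m where "m = nat \<lfloor>n * a' / a\<rfloor>"
  have m: "n * a' / a - 1 < m" "m \<le> n * a' / a"
    using pos unfolding m_def by (simp_all add: of_nat_nat)
  have "m * a \<le> n * a'" using m(2) pos by (simp add: field_simps)
  hence "m * b \<le> n * b'" by (rule H)
  moreover have "(n * a' / a - 1) * b < m * b" using m(1) pos by simp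
  ultimately have "(n * a' / a - 1) * b < n * b'" by linarith
  hence "n * (a' * b - a * b') < a * b" using pos by (simp add: field_simps)
  moreover have "a * b < n * (a' * b - a * b')" using n gap by (simp add: field_simps)
  ultimately show False by linarith
qed

text \<open>Monotonicity compares the orbits 1, a, a^2, ... and 1, a', a'^2, ... of two expanding
  scaling pairs, which bounds their exponents.\<close>
lemma scaling_exponent_le:
  assumes mono: "strict_mono f"
    and sc: "scales f a b" "a > 1" and sc': "scales f a' b'" "a' > 1"
  shows "ln b / ln a \<le> ln b' / ln a'"
proof -
  have b: "b > 1" "b' > 1" using scales_expanding mono sc sc' by blast+
  have "f 0 = 0" using scales_fixes_zero[OF strict_mono_imp_inj_on[OF mono] sc(1)] sc(2) by simp
  hence f1: "f 1 > 0" using strict_monoD[OF mono, of 0 1] by simp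
  have orbit: "f (a ^ m) = b ^ m * f 1" "f (a' ^ m) = b' ^ m * f 1" for m
    using scales_power[OF sc(1)] scales_power[OF sc'(1)] by (metis scales_def mult_1_right)+
  have "real m * ln b \<le> real n * ln b'" if "real m * ln a \<le> real n * ln a'" for m n
  proof -
    have "a ^ m \<le> a' ^ n" using that sc(2) sc'(2) by (simp add: ln_realpow flip: ln_le_cancel_iff)
    hence "b ^ m * f 1 \<le> b' ^ n * f 1" using mono orbit by (metis strict_mono_less_eq)
    hence "b ^ m \<le> b' ^ n" using f1 by simp
    thus ?thesis using b by (simp add: ln_realpow flip: ln_le_cancel_iff)
  qed
  moreover have "ln a > 0" "ln a' > 0" "ln b > 0" "ln b' > 0" using sc(2) sc'(2) b by simp_all
  ultimately show ?thesis by (rule ratio_le_of_multiples[rotated 4])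
qed

lemma scales_normalize:
  assumes mono: "strict_mono f" and sc: "scales f a b" and "a > 0" "a \<noteq> 1"
  obtains a' b' where "a' > 1" "scales f a' b'" "ln b' / ln a' = ln b / ln a"
proof (cases "a > 1")
  case True
  thus ?thesis using that sc by blast
next
  case False
  hence "1 / a > 1" using assms(3,4) by simp
  moreover have "b > 0" using scales_sign[OF mono sc] assms(3) by (auto simp: sgn_if split: if_splits)
  hence "scales f (1 / a) (1 / b)" using scales_inverse[OF sc] assms(3) by simp
  moreover have "ln (1 / b) / ln (1 / a) = ln b / ln a" using \<open>b > 0\<close> assms(3) by (simp add: ln_div)
  ultimately show ?thesis using that by blast
qed

lemma scaling_exponent_pos:
  assumes mono: "strict_mono f" and sc: "scales f a b" and "a > 0" "a \<noteq> 1"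
  shows "ln b / ln a > 0"
proof -
  obtain a' b' where a': "a' > 1" "scales f a' b'" "ln b' / ln a' = ln b / ln a"
    using scales_normalize[OF assms] .
  have "b' > 1" using scales_expanding[OF mono a'(2,1)] .
  thus ?thesis using a' by (metis divide_pos_pos ln_gt_zero)
qed

lemma scaling_exponent_unique:
  assumes mono: "strict_mono f"
    and sc: "scales f a b" "a > 0" "a \<noteq> 1" and sc': "scales f a' b'" "a' > 0" "a' \<noteq> 1"
  shows "ln b / ln a = ln b' / ln a'"
proof -
  obtain c d where cd: "c > 1" "scales f c d" "ln d / ln c = ln b / ln a"
    using scales_normalize[OF mono sc] .
  obtain c' d' where cd': "c' > 1" "scales f c' d'" "ln d' / ln c' = ln b' / ln a'"
    using scales_normalize[OF mono sc'] .
  show ?thesis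
    using scaling_exponent_le[OF mono cd(2,1) cd'(2,1)] scaling_exponent_le[OF mono cd'(2,1) cd(2,1)]
      cd(3) cd'(3) by linarith
qed

text \<open>A real number is determined by its sign and the logarithm of its modulus.\<close>
lemma eq_signed_powr_of_ln:
  fixes p q \<beta> :: real
  assumes "p \<noteq> 0" "q \<noteq> 0" "sgn q = sgn p" "ln \<bar>q\<bar> = \<beta> * ln \<bar>p\<bar>"
  shows "q = p * \<bar>p\<bar> powr (\<beta> - 1)"
proof -
  have "\<bar>q\<bar> = exp (\<beta> * ln \<bar>p\<bar>)" using assms(2,4) by (metis exp_ln zero_less_abs_iff)
  also have "\<dots> = \<bar>p\<bar> powr (1 + (\<beta> - 1))" using assms(1) by (simp add: powr_def)
  also have "\<dots> = \<bar>p\<bar> powr 1 * \<bar>p\<bar> powr (\<beta> - 1)" by (rule powr_add)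
  also have "\<dots> = \<bar>p\<bar> * \<bar>p\<bar> powr (\<beta> - 1)" using assms(1) by simp
  finally have "sgn q * \<bar>q\<bar> = sgn p * \<bar>p\<bar> * \<bar>p\<bar> powr (\<beta> - 1)" using assms(3) by simp
  thus ?thesis by (simp add: sgn_mult_abs)
qed

lemma ln_square: "ln (x ^ 2) = 2 * ln \<bar>x\<bar>" for x :: real
  by (metis ln_realpow of_nat_numeral power2_abs)

text \<open>All scaling pairs (p r, q r) of an increasing map share one positive exponent; it is
  read off from the squares (p r ^ 2, q r ^ 2), whose dilation factors are positive.\<close>
lemma common_scaling_exponent:
  fixes f :: "real \<Rightarrow> real" and p q :: "'i \<Rightarrow> real"
  assumes mono: "strict_mono f"
    and pnz: "\<forall>r\<in>I. p r \<noteq> 0" and sc: "\<forall>r\<in>I. scales f (p r) (q r)"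
  obtains \<beta> where "\<beta> > 0" "\<forall>r\<in>I. ln \<bar>q r\<bar> = \<beta> * ln \<bar>p r\<bar>"
proof (cases "\<exists>r\<in>I. \<bar>p r\<bar> \<noteq> 1")
  case True
  have inj: "inj f" using mono by (rule strict_mono_imp_inj_on)
  have sq: "scales f (p r ^ 2) (q r ^ 2)" "p r ^ 2 > 0" if "r \<in> I" for r
    using scales_power sc pnz that by auto
  from True obtain r1 where r1: "r1 \<in> I" "\<bar>p r1\<bar> \<noteq> 1" by blast
  have r1_sq: "p r1 ^ 2 \<noteq> 1" using r1(2) by (simp add: abs_square_eq_1)
  define \<beta> where "\<beta> = ln (q r1 ^ 2) / ln (p r1 ^ 2)"
  have "\<beta> > 0" unfolding \<beta>_def using scaling_exponent_pos[OF mono sq[OF r1(1)] r1_sq] .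
  moreover have "ln \<bar>q r\<bar> = \<beta> * ln \<bar>p r\<bar>" if r: "r \<in> I" for r
  proof (cases "\<bar>p r\<bar> = 1")
    case True
    thus ?thesis using scales_unit[OF inj] sc r by auto
  next
    case False
    hence "p r ^ 2 \<noteq> 1" by (simp add: abs_square_eq_1)
    hence "ln (q r ^ 2) / ln (p r ^ 2) = \<beta>"
      unfolding \<beta>_def using scaling_exponent_unique[OF mono sq[OF r] _ sq[OF r1(1)] r1_sq] by blast
    moreover have "ln \<bar>p r\<bar> \<noteq> 0" using False pnz r by simp
    ultimately show ?thesis by (simp add: ln_square field_simps)
  qed
  ultimately show ?thesis using that by blast
next
  case False
  hence "\<forall>r\<in>I. ln \<bar>q r\<bar> = 1 * ln \<bar>p r\<bar>"
    using scales_unit[OF strict_mono_imp_inj_on[OF mono]] sc by auto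
  thus ?thesis using that[of 1] by simp
qed

text \<open>The forward direction for increasing maps: the common exponent \<beta> determines |q r|,
  and the sign of q r is that of p r.\<close>
lemma increasing_conjugacy_exponent:
  fixes f :: "real \<Rightarrow> real" and p q :: "'i \<Rightarrow> real"
  assumes mono: "strict_mono f"
    and pnz: "\<forall>r\<in>I. p r \<noteq> 0" and sc: "\<forall>r\<in>I. scales f (p r) (q r)"
  shows "\<exists>\<alpha>. \<alpha> > -1 \<and> (\<forall>r\<in>I. q r = p r * \<bar>p r\<bar> powr \<alpha>)"
proof -
  obtain \<beta> where "\<beta> > 0" and \<beta>: "\<forall>r\<in>I. ln \<bar>q r\<bar> = \<beta> * ln \<bar>p r\<bar>"
    using common_scaling_exponent[OF assms] .
  have "q r = p r * \<bar>p r\<bar> powr (\<beta> - 1)" if r: "r \<in> I" for r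
  proof (rule eq_signed_powr_of_ln)
    show sgn: "sgn (q r) = sgn (p r)" using scales_sign[OF mono] sc pnz r by blast
    show "p r \<noteq> 0" using pnz r by blast
    thus "q r \<noteq> 0" using sgn by (metis sgn_0_0)
    show "ln \<bar>q r\<bar> = \<beta> * ln \<bar>p r\<bar>" using \<beta> r by blast
  qed
  moreover have "\<beta> - 1 > -1" using \<open>\<beta> > 0\<close> by simp
  ultimately show ?thesis by blast
qed

section \<open>Signed powers\<close>

definition signed_powr :: "real \<Rightarrow> real \<Rightarrow> real" where
  "signed_powr s x = sgn x * \<bar>x\<bar> powr s"

lemma signed_powr_continuous:
  assumes "s > 0"
  shows "continuous_on UNIV (signed_powr s)"
proof -
  have piecewise: "signed_powr s = (\<lambda>x. if x \<le> 0 then - ((- x) powr s) else x powr s)"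
    by (rule ext) (simp add: signed_powr_def abs_if sgn_if)
  have "continuous_on UNIV (\<lambda>x. if x \<le> 0 then - ((- x) powr s) else x powr s)"
  proof (rule continuous_on_cases_le[where h = "\<lambda>x. x"])
    show "continuous_on {x \<in> UNIV. x \<le> 0} (\<lambda>x. - ((- x) powr s))"
      using assms by (auto intro!: continuous_intros continuous_on_powr')
    show "continuous_on {x \<in> UNIV. 0 \<le> x} (\<lambda>x. x powr s)"
      using assms by (auto intro!: continuous_intros continuous_on_powr')
  qed (auto intro: continuous_intros)
  thus ?thesis unfolding piecewise .
qed

lemma sgn_signed_powr: "sgn (signed_powr s x) = sgn x"
  by (cases "x = 0") (simp_all add: signed_powr_def sgn_mult)

lemma abs_signed_powr: "\<bar>signed_powr s x\<bar> = \<bar>x\<bar> powr s"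
  by (cases "x = 0") (simp_all add: signed_powr_def abs_mult)

lemma signed_powr_inverse:
  assumes "s > 0"
  shows "signed_powr (1 / s) (signed_powr s x) = x"
proof -
  have "signed_powr (1 / s) (signed_powr s x) = sgn x * (\<bar>x\<bar> powr s) powr (1 / s)"
    by (simp only: signed_powr_def[of "1 / s"] sgn_signed_powr abs_signed_powr)
  also have "\<dots> = sgn x * \<bar>x\<bar>" using assms by (simp add: powr_powr)
  finally show ?thesis by (simp only: sgn_mult_abs)
qed

lemma signed_powr_scales: "scales (signed_powr s) p (sgn p * \<bar>p\<bar> powr s)"
  by (simp add: scales_def signed_powr_def sgn_mult abs_mult powr_mult)

lemma signed_powr_homeomorphism:
  assumes "s > 0"
  shows "homeomorphism UNIV UNIV (signed_powr s) (signed_powr (1 / s))"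
proof (rule homeomorphismI)
  show "continuous_on UNIV (signed_powr s)" "continuous_on UNIV (signed_powr (1 / s))"
    using assms by (simp_all add: signed_powr_continuous)
  show "signed_powr (1 / s) (signed_powr s x) = x" for x
    using assms by (rule signed_powr_inverse)
  show "signed_powr s (signed_powr (1 / s) y) = y" for y
    using signed_powr_inverse[of "1 / s" y] assms by simp
qed auto

lemma signed_powr_conjugacy:
  fixes p q :: "'i \<Rightarrow> real"
  assumes "\<alpha> > -1" and q: "\<forall>r\<in>I. q r = p r * \<bar>p r\<bar> powr \<alpha>"
  shows "\<exists>f g. homeomorphism UNIV UNIV f g \<and> (\<forall>r\<in>I. scales f (p r) (q r))"
proof -
  have "q r = sgn (p r) * \<bar>p r\<bar> powr (\<alpha> + 1)" if "r \<in> I" for r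
  proof -
    have "\<bar>p r\<bar> powr (\<alpha> + 1) = \<bar>p r\<bar> * \<bar>p r\<bar> powr \<alpha>" by (simp add: powr_add)
    thus ?thesis using q that by (metis mult.assoc sgn_mult_abs)
  qed
  hence "\<forall>r\<in>I. scales (signed_powr (\<alpha> + 1)) (p r) (q r)" using signed_powr_scales by simp
  moreover have "homeomorphism UNIV UNIV (signed_powr (\<alpha> + 1)) (signed_powr (1 / (\<alpha> + 1)))"
    using signed_powr_homeomorphism \<open>\<alpha> > -1\<close> by simp
  ultimately show ?thesis by blast
qed

text \<open>The forward direction: a homeomorphism of the line is strictly monotone, and a
  decreasing one is turned into an increasing one by negation.\<close>
lemma homeomorphism_conjugacy_exponent:
  fixes f g :: "real \<Rightarrow> real" and p q :: "'i \<Rightarrow> real"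
  assumes hom: "homeomorphism UNIV UNIV f g"
    and pnz: "\<forall>r\<in>I. p r \<noteq> 0" and sc: "\<forall>r\<in>I. scales f (p r) (q r)"
  shows "\<exists>\<alpha>. \<alpha> > -1 \<and> (\<forall>r\<in>I. q r = p r * \<bar>p r\<bar> powr \<alpha>)"
proof -
  have "inj f" using hom unfolding homeomorphism_def by (metis UNIV_I inj_on_inverseI)
  moreover have "continuous_on UNIV f" using hom by (simp add: homeomorphism_def)
  ultimately have "strict_mono f \<or> strict_antimono_on UNIV f"
    using injective_eq_monotone_map[OF is_interval_univ, of f] by simp
  thus ?thesis
  proof
    assume "strict_mono f"
    thus ?thesis using sc by (rule increasing_conjugacy_exponent[OF _ pnz])
  next
    assume "strict_antimono_on UNIV f"
    hence "strict_mono (\<lambda>x. - f x)" by (simp add: monotone_on_def)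
    moreover have "\<forall>r\<in>I. scales (\<lambda>x. - f x) (p r) (q r)" using sc scales_uminus by blast
    ultimately show ?thesis by (rule increasing_conjugacy_exponent[OF _ pnz])
  qed
qed

text \<open>The main theorem.\<close>
theorem theorem9p1:
  fixes I :: "'i set" and p q :: "'i \<Rightarrow> real"
  assumes "\<forall>r\<in>I. p r \<noteq> 0" and "\<forall>r\<in>I. q r \<noteq> 0"
  shows "(\<exists>f g. homeomorphism (UNIV::real set) (UNIV::real set) f g \<and>
            (\<forall>r\<in>I. \<forall>x. f (p r * x) = q r * f x))
         \<longleftrightarrow> (\<exists>\<alpha>::real. \<alpha> > -1 \<and> (\<forall>r\<in>I. q r = p r * \<bar>p r\<bar> powr \<alpha>))"
proof
  assume "\<exists>f g. homeomorphism (UNIV::real set) (UNIV::real set) f g \<and>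
            (\<forall>r\<in>I. \<forall>x. f (p r * x) = q r * f x)"
  then obtain f g where "homeomorphism UNIV UNIV f g" "\<forall>r\<in>I. scales f (p r) (q r)"
    by (auto simp: scales_def)
  thus "\<exists>\<alpha>. \<alpha> > -1 \<and> (\<forall>r\<in>I. q r = p r * \<bar>p r\<bar> powr \<alpha>)"
    using homeomorphism_conjugacy_exponent assms(1) by blast
next
  assume "\<exists>\<alpha>::real. \<alpha> > -1 \<and> (\<forall>r\<in>I. q r = p r * \<bar>p r\<bar> powr \<alpha>)"
  thus "\<exists>f g. homeomorphism (UNIV::real set) (UNIV::real set) f g \<and>
            (\<forall>r\<in>I. \<forall>x. f (p r * x) = q r * f x)"
    using signed_powr_conjugacy unfolding scales_def by blast
qed

end
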